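(* Let $p$ be an odd prime, $P,Q\in\mathbb Z_p$ with $PQ\not\equiv0\pmod p$. Then $$U_{\frac{p-1}2}(P,Q)\equiv\frac{2P}Q\Big(\frac Pp\Big)\sum_{k=1}^{[\frac{p+1}4]}\binom{4k-2}{2k-1}\Big(\frac Q{4P^2}\Big)^k\pmod p.$$
   Context: The Lucas sequence $U_n(P,Q)$ is defined by $U_0=0$, $U_1=1$, $U_{n+1}=PU_n-QU_{n-1}$ for $n\ge1$. $[x]$ is the greatest integer $\le x$; $\mathbb Z_p$ is the set of rational numbers whose denominator is not divisible by $p$; $(\frac{\cdot}{p})$ is the Legendre symbol. *)

theory Defs
  imports "HOL-Number_Theory.Number_Theory"
begin

fun lucasU :: "rat \<Rightarrow> rat \<Rightarrow> nat \<Rightarrow> rat" where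
  "lucasU P Q 0 = 0"
| "lucasU P Q (Suc 0) = 1"
| "lucasU P Q (Suc (Suc n)) = P * lucasU P Q (Suc n) - Q * lucasU P Q n"

definition in_Zp :: "nat \<Rightarrow> rat \<Rightarrow> bool" where
  "in_Zp p x \<longleftrightarrow> \<not> int p dvd snd (quotient_of x)"

definition rat_cong :: "rat \<Rightarrow> rat \<Rightarrow> nat \<Rightarrow> bool" where
  "rat_cong x y p \<longleftrightarrow> in_Zp p ((x - y) / of_nat p)"

text \<open>Legendre symbol of a/b \<in> Z_p, taken as (ab/p) = (a/p)(b/p).\<close>
definition Legendre_rat :: "rat \<Rightarrow> nat \<Rightarrow> int" where
  "Legendre_rat x p = Legendre (fst (quotient_of x) * snd (quotient_of x)) (int p)"

end

theory Submission
  imports Defs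
begin

text \<open>
  Put n = (p - 1) / 2 and w = Q / (4 P^2). The explicit formula
  U_n = sum_k C(n-1-k, k) P^(n-1) (-4 w)^k reduces the claim to a termwise congruence.
  Because p = 2n + 1, twice each factor n-1-k-t of the falling factorial of n-1-k is
  congruent to -(2k+3+2t) modulo p, so (-4)^k C(n-1-k, k) is congruent to
  2^k (2k+3)(2k+5)...(4k+1) / k! = C(4k+1, 2k). Euler's criterion turns P^(n-1) into
  (P/p) / P, and C(4k+2, 2k+1) = 2 C(4k+1, 2k) matches the shifted index on the right.
\<close>

definition fib_poly :: "nat \<Rightarrow> 'a::comm_ring_1 \<Rightarrow> 'a" where
  "fib_poly m z = (\<Sum>k\<le>m. of_nat ((m - k) choose k) * z ^ k)"

lemma fib_poly_Suc_Suc: "fib_poly (Suc (Suc m)) z = fib_poly (Suc m) z + z * fib_poly m z"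
proof -
  define t where "t j k = of_nat ((j - k) choose k) * z ^ k" for j k
  have pascal: "t (Suc (Suc m)) (Suc k) = t (Suc m) (Suc k) + z * t m k" if "k \<le> Suc m" for k
  proof (cases "k \<le> m")
    case True
    then have "Suc m - k = Suc (m - k)" by simp
    then show ?thesis unfolding t_def by (simp add: algebra_simps)
  next
    case False
    with that have "k = Suc m" by simp
    then show ?thesis unfolding t_def by simp
  qed
  have "fib_poly (Suc (Suc m)) z = 1 + (\<Sum>k\<le>Suc m. t (Suc (Suc m)) (Suc k))"
    unfolding fib_poly_def t_def by (subst sum.atMost_Suc_shift) simp
  also have "\<dots> = (1 + (\<Sum>k\<le>Suc m. t (Suc m) (Suc k))) + z * (\<Sum>k\<le>Suc m. t m k)"
    using pascal by (simp add: sum.distrib sum_distrib_left del: sum.atMost_Suc)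
  also have "\<dots> = fib_poly (Suc m) z + z * fib_poly m z"
    unfolding fib_poly_def t_def by (subst (2) sum.atMost_Suc_shift) simp
  finally show ?thesis .
qed

lemma fib_poly_eq_sum_half: "fib_poly m z = (\<Sum>k\<le>m div 2. of_nat ((m - k) choose k) * z ^ k)"
  unfolding fib_poly_def
proof (intro sum.mono_neutral_right ballI)
  fix k assume "k \<in> {..m} - {..m div 2}"
  then have "m - k < k" by auto
  then show "of_nat ((m - k) choose k) * z ^ k = 0" by (simp add: binomial_eq_0)
qed auto

lemma lucasU_eq_fib_poly:
  assumes "P \<noteq> 0"
  shows "lucasU P Q (Suc m) = P ^ m * fib_poly m (- Q / P\<^sup>2)"
proof (induction m rule: induct_nat_012)
  case (ge2 m)
  define z where "z = - Q / P\<^sup>2"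
  have Q: "Q = - z * P\<^sup>2" unfolding z_def using assms by simp
  have "lucasU P Q (Suc (Suc (Suc m)))
      = P * (P ^ Suc m * fib_poly (Suc m) z) - Q * (P ^ m * fib_poly m z)"
    using ge2 unfolding z_def by simp
  also have "\<dots> = P ^ Suc (Suc m) * fib_poly (Suc (Suc m)) z"
    unfolding Q fib_poly_Suc_Suc by (simp add: algebra_simps power2_eq_square)
  finally show ?case unfolding z_def .
qed (simp_all add: fib_poly_def)

lemma lucasU_Suc_eq_sum_half:
  assumes "P \<noteq> 0"
  shows "lucasU P Q (Suc m) = (\<Sum>k\<le>m div 2. of_nat ((m - k) choose k) * P ^ m * (- Q / P\<^sup>2) ^ k)"
  unfolding lucasU_eq_fib_poly[OF assms] fib_poly_eq_sum_half sum_distrib_left by (simp add: ac_simps)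

lemma fact_mult_binomial: "fact k * (n choose k) = (\<Prod>t<k. n - t)"
proof (induction k)
  case (Suc k)
  have "Suc k * (n choose Suc k) = (n - k) * (n choose k)"
    by (metis binomial_absorb_comp binomial_absorption)
  then have "fact (Suc k) * (n choose Suc k) = (n - k) * (fact k * (n choose k))"
    by (metis fact_Suc mult.assoc mult.left_commute of_nat_id)
  with Suc show ?case by simp
qed simp

lemma prod_lessThan_add: "(\<Prod>t<a + b. f t) = (\<Prod>t<a. f t) * (\<Prod>t<b. f (a + t))" for a b :: nat
  by (induction b) (simp_all add: mult.assoc)

lemma fact_double_eq_odd_prod: "fact (2 * j) = 2 ^ j * fact j * (\<Prod>t<j. 2 * t + 1 :: nat)"
proof (induction j)
  case (Suc j)
  have "fact (2 * Suc j) = (2 * j + 2) * ((2 * j + 1) * (fact (2 * j) :: nat))"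
    by (simp add: algebra_simps)
  with Suc show ?case by (simp add: algebra_simps)
qed simp

lemma fact_mult_binomial_4i_2i:
  "fact i * ((4 * i + 1) choose (2 * i)) = 2 ^ i * (\<Prod>t<i. 2 * i + 3 + 2 * t :: nat)"
proof -
  define D where "D j = (\<Prod>t<j. 2 * t + 1 :: nat)" for j
  define R where "R = (\<Prod>t<i. 2 * i + 3 + 2 * t :: nat)"
  define F where "F = (fact (4 * i + 1) :: nat)"
  define G where "G = (fact (2 * i + 1) :: nat)"
  define C where "C = (4 * i + 1) choose (2 * i)"
  have "D (i + 1 + i) = D (i + 1) * R"
    unfolding D_def R_def prod_lessThan_add by (simp add: algebra_simps numeral_eq_Suc)
  moreover have "2 * i + 1 = i + 1 + i" "D (i + 1) = (2 * i + 1) * D i"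
    unfolding D_def by simp_all
  ultimately have D_odd: "D (2 * i + 1) = (2 * i + 1) * D i * R"
    by metis
  have "fact (2 * (2 * i + 1)) = (4 * i + 2) * F"
    unfolding F_def by (simp add: algebra_simps)
  moreover have "(2::nat) ^ (i * 2) = 2 ^ i * 2 ^ i"
    by (metis mult_2_right power_add)
  ultimately have "2 * (2 * i + 1) * F = 2 * (2 * i + 1) * (2 ^ i * 2 ^ i * G * D i * R)"
    using fact_double_eq_odd_prod[of "2 * i + 1"]
    unfolding D_def[symmetric] D_odd G_def[symmetric] by (simp add: algebra_simps)
  then have F: "F = 2 ^ i * 2 ^ i * G * D i * R"
    by (metis mult_left_cancel mult_is_0 add_is_0 one_neq_zero zero_neq_numeral)
  have "fact (2 * i) * G * C = F"
    using binomial_fact_lemma[of "2 * i" "4 * i + 1"] unfolding F_def G_def C_def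
    by (simp add: algebra_simps)
  then have "(2 ^ i * D i * G) * (fact i * C) = (2 ^ i * D i * G) * (2 ^ i * R)"
    unfolding F fact_double_eq_odd_prod[of i, folded D_def] by (simp add: algebra_simps)
  moreover have "D i > 0" "G > 0" unfolding D_def G_def by (simp_all add: prod_pos)
  ultimately show ?thesis unfolding R_def C_def by simp
qed

lemma binomial_Suc_double_Suc: "(2 * a + 2) choose (a + 1) = 2 * ((2 * a + 1) choose a)"
  using binomial_symmetric[of a "2 * a + 1"] by simp

lemma sum_binomial_4k_2_shift:
  "(\<Sum>k = 1..Suc M. of_nat ((4 * k - 2) choose (2 * k - 1)) * w ^ k)
     = 2 * w * (\<Sum>k\<le>M. of_nat ((4 * k + 1) choose (2 * k)) * w ^ k :: 'a::comm_ring_1)"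
proof -
  have "(4 * Suc k - 2) choose (2 * Suc k - 1) = 2 * ((4 * k + 1) choose (2 * k))" for k
    using binomial_Suc_double_Suc[of "2 * k"] by (simp add: algebra_simps)
  then show ?thesis
    unfolding One_nat_def sum.shift_bounds_cl_Suc_ivl atLeast0AtMost sum_distrib_left
    by (intro sum.cong) (simp_all add: algebra_simps)
qed

lemma neg_four_pow_binomial_cong:
  assumes prime: "prime p" and p: "p = 2 * n + 1" and i: "2 * i + 1 \<le> n"
  shows "[(-4) ^ i * int ((n - 1 - i) choose i) = int ((4 * i + 1) choose (2 * i))] (mod int p)"
proof -
  define N where "N = n - 1 - i"
  define c where "c t = int (2 * i + 3 + 2 * t)" for t
  have "2 ^ i * int (fact i * (N choose i)) = (\<Prod>t<i. 2 * int (N - t))"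
    unfolding fact_mult_binomial by (simp add: prod.distrib)
  also have "\<dots> = (\<Prod>t<i. int p - c t)"
    using i unfolding c_def N_def p by (intro prod.cong) auto
  also have "[\<dots> = (\<Prod>t<i. - c t)] (mod int p)"
    by (rule cong_prod) (simp add: cong_iff_dvd_diff)
  finally have "[(-2) ^ i * (2 ^ i * int (fact i * (N choose i))) = (-2) ^ i * (\<Prod>t<i. - c t)] (mod int p)"
    by (rule cong_scalar_left)
  moreover have "(-2) ^ i * (2 ^ i * int (fact i * (N choose i))) = int (fact i) * ((-4) ^ i * int (N choose i))"
    by (simp add: power_mult_distrib[symmetric])
  moreover have "(-2) ^ i * (\<Prod>t<i. - c t) = 2 ^ i * (\<Prod>t<i. c t)"
    by (simp add: prod_uminus power_mult_distrib[symmetric])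
  moreover have "2 ^ i * (\<Prod>t<i. c t) = int (fact i) * int ((4 * i + 1) choose (2 * i))"
    unfolding of_nat_mult[symmetric] fact_mult_binomial_4i_2i c_def by simp
  moreover have "\<not> p dvd fact i"
    using prime i p by (simp add: prime_dvd_fact_iff)
  then have "coprime (int (fact i)) (int p)"
    using prime by (metis prime_imp_coprime coprime_commute coprime_int_iff)
  ultimately show ?thesis
    unfolding N_def using cong_mult_lcancel by metis
qed

lemma in_Zp_iff_fraction:
  "in_Zp p x \<longleftrightarrow> (\<exists>a b. b \<noteq> 0 \<and> \<not> int p dvd b \<and> x = of_int a / of_int b)"
proof
  assume "in_Zp p x"
  obtain a b where q: "quotient_of x = (a, b)" by (cases "quotient_of x")
  with \<open>in_Zp p x\<close> show "\<exists>a b. b \<noteq> 0 \<and> \<not> int p dvd b \<and> x = of_int a / of_int b"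
    using quotient_of_denom_pos[OF q] quotient_of_div[OF q] unfolding in_Zp_def
    by (intro exI[of _ a] exI[of _ b]) auto
next
  assume "\<exists>a b. b \<noteq> 0 \<and> \<not> int p dvd b \<and> x = of_int a / of_int b"
  then obtain a b where ab: "b \<noteq> 0" "\<not> int p dvd b" "x = of_int a / of_int b" by blast
  obtain a' b' where q: "quotient_of x = (a', b')" by (cases "quotient_of x")
  have "b' > 0" "coprime a' b'" using quotient_of_denom_pos[OF q] quotient_of_coprime[OF q] .
  have "of_int a / of_int b = (of_int a' / of_int b' :: rat)" using ab quotient_of_div[OF q] by simp
  then have "a * b' = a' * b" using ab \<open>b' > 0\<close>
    by (simp add: field_simps) (metis of_int_eq_iff of_int_mult)
  then have "b' dvd a' * b" by (metis dvd_triv_right)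
  with \<open>coprime a' b'\<close> have "b' dvd b" by (metis coprime_commute coprime_dvd_mult_right_iff)
  with ab q show "in_Zp p x" unfolding in_Zp_def by (auto dest: dvd_trans)
qed

context
  fixes p :: nat
  assumes prime: "prime p"
begin

lemma in_Zp_of_int: "in_Zp p (of_int a)"
  using prime unfolding in_Zp_def by (simp add: prime_nat_iff)

lemma in_Zp_add:
  assumes "in_Zp p x" "in_Zp p y"
  shows "in_Zp p (x + y)"
proof -
  obtain a b c d where "b \<noteq> 0" "\<not> int p dvd b" "x = of_int a / of_int b"
    "d \<noteq> 0" "\<not> int p dvd d" "y = of_int c / of_int d"
    using assms in_Zp_iff_fraction by meson
  moreover from this have "x + y = of_int (a * d + c * b) / of_int (b * d)"
    by (simp add: field_simps)
  ultimately show ?thesis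
    using prime in_Zp_iff_fraction by (metis mult_eq_0_iff prime_dvd_mult_iff prime_nat_int_transfer)
qed

lemma in_Zp_mult:
  assumes "in_Zp p x" "in_Zp p y"
  shows "in_Zp p (x * y)"
proof -
  obtain a b c d where "b \<noteq> 0" "\<not> int p dvd b" "x = of_int a / of_int b"
    "d \<noteq> 0" "\<not> int p dvd d" "y = of_int c / of_int d"
    using assms in_Zp_iff_fraction by meson
  moreover from this have "x * y = of_int (a * c) / of_int (b * d)"
    by (simp add: field_simps)
  ultimately show ?thesis
    using prime in_Zp_iff_fraction by (metis mult_eq_0_iff prime_dvd_mult_iff prime_nat_int_transfer)
qed

lemma in_Zp_power: "in_Zp p x \<Longrightarrow> in_Zp p (x ^ n)"
  using in_Zp_of_int[of 1] by (induction n) (auto intro: in_Zp_mult)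

lemma in_Zp_inverse:
  assumes "in_Zp p x" "\<not> rat_cong x 0 p"
  shows "in_Zp p (1 / x)"
proof -
  obtain a b where ab: "b \<noteq> 0" "\<not> int p dvd b" "x = of_int a / of_int b"
    using assms(1) in_Zp_iff_fraction by meson
  have "\<not> int p dvd a"
  proof
    assume "int p dvd a"
    then obtain c where "a = int p * c" by blast
    with ab prime have "(x - 0) / of_nat p = of_int c / of_int b"
      by (simp add: field_simps prime_gt_0_nat)
    with assms(2) ab show False unfolding rat_cong_def using in_Zp_iff_fraction by metis
  qed
  moreover have "1 / x = of_int b / of_int a" using ab by simp
  ultimately show ?thesis using in_Zp_iff_fraction by (metis dvd_0_right)
qed

lemma in_Zp_inverse_of_int: "\<not> int p dvd a \<Longrightarrow> in_Zp p (1 / of_int a)"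
  using in_Zp_iff_fraction[of p "1 / of_int a"] by (metis dvd_0_right of_int_1)

lemma in_Zp_divide_power_two:
  assumes "odd p" "in_Zp p x"
  shows "in_Zp p (x / 2 ^ k)"
proof -
  have "\<not> int p dvd 2 ^ k"
  proof
    assume "int p dvd 2 ^ k"
    then have "p dvd 2"
      using prime prime_dvd_power by (metis int_dvd_int_iff of_nat_numeral of_nat_power)
    with prime assms(1) show False
      using dvd_imp_le[of p 2] prime_ge_2_nat[of p] by auto
  qed
  then have "in_Zp p (x * (1 / of_int (2 ^ k)))"
    using in_Zp_mult[OF assms(2) in_Zp_inverse_of_int] by blast
  then show ?thesis by simp
qed

lemma rat_cong_refl: "rat_cong x x p"
  unfolding rat_cong_def using in_Zp_of_int[of 0] by simp

lemma rat_cong_sym: "rat_cong x y p \<Longrightarrow> rat_cong y x p"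
  unfolding rat_cong_def using in_Zp_mult[OF in_Zp_of_int[of "-1"]]
  by (fastforce simp: minus_divide_left)

lemma rat_cong_trans: "rat_cong x y p \<Longrightarrow> rat_cong y z p \<Longrightarrow> rat_cong x z p"
  unfolding rat_cong_def using in_Zp_add[of "(x - y) / of_nat p" "(y - z) / of_nat p"]
  by (simp add: field_simps diff_divide_distrib[symmetric] add_divide_distrib[symmetric])

lemma rat_cong_add: "rat_cong a b p \<Longrightarrow> rat_cong c d p \<Longrightarrow> rat_cong (a + c) (b + d) p"
  unfolding rat_cong_def using in_Zp_add[of "(a - b) / of_nat p" "(c - d) / of_nat p"]
  by (simp add: add_divide_distrib[symmetric] algebra_simps)

lemma rat_cong_mult_right: "rat_cong a b p \<Longrightarrow> in_Zp p u \<Longrightarrow> rat_cong (a * u) (b * u) p"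
  unfolding rat_cong_def using in_Zp_mult[of "(a - b) / of_nat p" u]
  by (simp add: algebra_simps)

lemma rat_cong_mult:
  assumes "rat_cong a b p" "rat_cong c d p" "in_Zp p a" "in_Zp p d"
  shows "rat_cong (a * c) (b * d) p"
  using rat_cong_trans rat_cong_mult_right[OF assms(1,4)]
    rat_cong_mult_right[OF assms(2,3)] by (metis mult.commute)

lemma rat_cong_sum:
  "(\<And>i. i \<in> A \<Longrightarrow> rat_cong (f i) (g i) p) \<Longrightarrow> rat_cong (sum f A) (sum g A) p"
  by (induction A rule: infinite_finite_induct) (auto intro: rat_cong_add rat_cong_refl)

lemma rat_cong_of_int: "[a = b] (mod int p) \<Longrightarrow> rat_cong (of_int a) (of_int b) p"
proof -
  assume "[a = b] (mod int p)"
  then obtain c where "a - b = int p * c" by (metis cong_iff_dvd_diff dvd_def)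
  with prime have "(of_int a - of_int b) / (of_nat p :: rat) = of_int c"
    by (simp add: field_simps prime_gt_0_nat)
  then show ?thesis unfolding rat_cong_def using in_Zp_of_int by simp
qed

lemma rat_cong_of_int_mult:
  assumes "[a = b] (mod int p)" "rat_cong u v p" "in_Zp p v"
  shows "rat_cong (of_int a * u) (of_int b * v) p"
  using rat_cong_mult[OF rat_cong_of_int[OF assms(1)] assms(2) in_Zp_of_int assms(3)] .

lemma Legendre_rat_euler_criterion:
  assumes "odd p" "in_Zp p x"
  shows "rat_cong (of_int (Legendre_rat x p)) (x ^ ((p - 1) div 2)) p"
proof -
  obtain a b where q: "quotient_of x = (a, b)" by (cases "quotient_of x")
  have "b > 0" "\<not> int p dvd b" "x = of_int a / of_int b"
    using quotient_of_denom_pos[OF q] assms(2) q quotient_of_div[OF q] unfolding in_Zp_def by auto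
  define n where "n = (p - 1) div 2"
  have "p - 1 = 2 * n" "p > 2"
    unfolding n_def using assms(1) prime prime_ge_2_nat[OF prime] by (auto simp: le_less)
  have "[Legendre (a * b) (int p) = (a * b) ^ n] (mod int p)"
    unfolding n_def by (rule euler_criterion[OF prime \<open>p > 2\<close>])
  then have euler: "rat_cong (of_int (Legendre_rat x p)) (of_int ((a * b) ^ n)) p"
    unfolding Legendre_rat_def q fst_conv snd_conv by (rule rat_cong_of_int)
  have "\<not> p dvd nat b" using \<open>b > 0\<close> \<open>\<not> int p dvd b\<close> by (simp add: int_dvd_int_iff[symmetric])
  then have "[nat b ^ (p - 1) = 1] (mod p)" by (rule fermat_theorem[OF prime])
  then have "[b ^ (p - 1) = 1] (mod int p)"
    using \<open>b > 0\<close> by (metis cong_int_iff of_nat_1 of_nat_power int_nat_eq less_le)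
  then have "rat_cong (of_int (b ^ (p - 1)) * x ^ n) (1 * x ^ n) p"
    using rat_cong_mult_right rat_cong_of_int in_Zp_power assms(2) by (metis of_int_1)
  moreover have "of_int ((a * b) ^ n) = of_int (b ^ (p - 1)) * (x ^ n :: rat)"
    using \<open>b > 0\<close> unfolding \<open>x = _\<close> \<open>p - 1 = 2 * n\<close>
    by (simp add: power_mult field_simps power2_eq_square)
  ultimately show ?thesis using rat_cong_trans[OF euler] unfolding n_def by simp
qed

lemma power_half_pred_cong_Legendre_rat:
  assumes "odd p" "in_Zp p x" "\<not> rat_cong x 0 p"
  shows "rat_cong (x ^ ((p - 1) div 2 - 1)) (of_int (Legendre_rat x p) / x) p"
proof -
  have "x \<noteq> 0" using assms(3) rat_cong_refl by auto
  have "(p - 1) div 2 \<ge> 1" using assms(1) prime_ge_2_nat[OF prime] by (auto elim!: oddE)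
  with \<open>x \<noteq> 0\<close> have "x ^ ((p - 1) div 2) * (1 / x) = x ^ ((p - 1) div 2 - 1)"
    by (simp add: power_eq_if)
  moreover have "rat_cong (of_int (Legendre_rat x p) * (1 / x)) (x ^ ((p - 1) div 2) * (1 / x)) p"
    using Legendre_rat_euler_criterion[OF assms(1,2)] in_Zp_inverse[OF assms(2,3)]
    by (rule rat_cong_mult_right)
  ultimately show ?thesis using rat_cong_sym by simp
qed

lemma lucas_term_cong:
  assumes "odd p" "in_Zp p x" "\<not> rat_cong x 0 p" "in_Zp p w"
    and k: "2 * k + 1 \<le> (p - 1) div 2"
  shows "rat_cong (of_nat (((p - 1) div 2 - 1 - k) choose k) * x ^ ((p - 1) div 2 - 1) * ((-4) ^ k * w ^ k))
           (of_nat ((4 * k + 1) choose (2 * k)) * (of_int (Legendre_rat x p) / x) * w ^ k) p"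
proof -
  have "p = 2 * ((p - 1) div 2) + 1" using assms(1) by presburger
  then have "rat_cong (of_int ((-4) ^ k * int (((p - 1) div 2 - 1 - k) choose k)) * x ^ ((p - 1) div 2 - 1) * w ^ k)
      (of_int (int ((4 * k + 1) choose (2 * k))) * (of_int (Legendre_rat x p) / x) * w ^ k) p"
    using power_half_pred_cong_Legendre_rat[OF assms(1-3)] in_Zp_power[OF assms(4)]
      in_Zp_mult[OF in_Zp_of_int in_Zp_inverse[OF assms(2,3)]]
    by (intro rat_cong_mult_right rat_cong_of_int_mult neg_four_pow_binomial_cong[OF prime _ k]) simp_all
  then show ?thesis by (simp add: ac_simps)
qed

end

theorem lemma3p2:
  fixes p :: nat and P Q :: rat
  assumes "prime p" and "odd p"
    and "in_Zp p P" and "in_Zp p Q"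
    and "\<not> rat_cong (P * Q) 0 p"
  shows "rat_cong (lucasU P Q ((p - 1) div 2))
           (2 * P / Q * of_int (Legendre_rat P p) *
            (\<Sum>k = 1..(p + 1) div 4. of_nat ((4 * k - 2) choose (2 * k - 1)) * (Q / (4 * P ^ 2)) ^ k))
           p"
proof -
  note prime = assms(1)
  define n where "n = (p - 1) div 2"
  define L where "L = (of_int (Legendre_rat P p) :: rat)"
  define w where "w = Q / (4 * P ^ 2)"
  have "n \<ge> 1"
    unfolding n_def using assms(2) prime_ge_2_nat[OF prime] by (auto elim!: oddE)
  then have "(p + 1) div 4 = Suc ((n - 1) div 2)"
    unfolding n_def using assms(2) by presburger
  have "P \<noteq> 0" "Q \<noteq> 0" "\<not> rat_cong P 0 p"
    using assms(4,5) rat_cong_refl[OF prime] rat_cong_mult_right[OF prime, of P 0 Q] by auto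
  have "in_Zp p w"
    using in_Zp_divide_power_two[OF prime assms(2) in_Zp_mult[OF prime assms(4)], of "(1 / P) ^ 2" 2]
      in_Zp_power[OF prime in_Zp_inverse[OF prime assms(3) \<open>\<not> rat_cong P 0 p\<close>]]
    unfolding w_def by (simp add: power_one_over mult.commute)
  have "- Q / P\<^sup>2 = -4 * w" unfolding w_def by simp
  then have lucas: "lucasU P Q n
      = (\<Sum>k\<le>(n - 1) div 2. of_nat ((n - 1 - k) choose k) * P ^ (n - 1) * ((-4) ^ k * w ^ k))"
    using lucasU_Suc_eq_sum_half[OF \<open>P \<noteq> 0\<close>, of Q "n - 1"] \<open>n \<ge> 1\<close>
    unfolding power_mult_distrib[symmetric] by simp
  have "2 * P / Q * L * (\<Sum>k = 1..(p + 1) div 4. of_nat ((4 * k - 2) choose (2 * k - 1)) * w ^ k)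
      = 2 * P / Q * L * (2 * w) * (\<Sum>k\<le>(n - 1) div 2. of_nat ((4 * k + 1) choose (2 * k)) * w ^ k)"
    unfolding \<open>(p + 1) div 4 = _\<close> sum_binomial_4k_2_shift by (simp only: mult.assoc)
  also have "2 * P / Q * L * (2 * w) = L / P"
    unfolding w_def using \<open>P \<noteq> 0\<close> \<open>Q \<noteq> 0\<close> by (simp add: field_simps power2_eq_square)
  finally have rhs: "2 * P / Q * L * (\<Sum>k = 1..(p + 1) div 4. of_nat ((4 * k - 2) choose (2 * k - 1)) * w ^ k)
      = (\<Sum>k\<le>(n - 1) div 2. of_nat ((4 * k + 1) choose (2 * k)) * (L / P) * w ^ k)"
    by (simp add: sum_distrib_left ac_simps)
  have "rat_cong (lucasU P Q n) (2 * P / Q * L *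
      (\<Sum>k = 1..(p + 1) div 4. of_nat ((4 * k - 2) choose (2 * k - 1)) * w ^ k)) p"
    unfolding lucas rhs using \<open>n \<ge> 1\<close>
    by (intro rat_cong_sum[OF prime] lucas_term_cong[OF prime assms(2,3) \<open>\<not> rat_cong P 0 p\<close> \<open>in_Zp p w\<close>,
        folded n_def L_def]) simp
  then show ?thesis unfolding n_def L_def w_def .
qed

end
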